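(* If $\lambda$ is $k$-small, then $$\sigma\big(g^{(k)}_\lambda(y|b)\big)=\Big(\prod_{x\in\mathrm{diag}(\lambda)}e^{a_{r(x)+1}-a_{b(x)}}\Big)\tilde g^{(k)}_\lambda(y|b),$$ where $\mathrm{diag}(\lambda)$ is the set of boxes $(i,i)\in\lambda$, and for $x=(i,i)$, $r(x)=\lambda_i-i\bmod n$ is the $n$-residue of the rightmost box of row $i$ and $b(x)=i-\lambda'_i\bmod n$ is the $n$-residue of the bottom box of column $i$.
   Context: Fix $n\ge2$, $k=n-1$. $R(T)=\mathbb{Z}[e^{\pm a_1},\dots,e^{\pm a_n}]/(e^{a_1+\cdots+a_n}-1)$; subscripts of $a_i,b_i$ mod $n$ in $\{1,\dots,n\}$; $b_i=1-e^{-a_i}$. $\hat\Lambda$: symmetric formal power series in $y=(y_1,y_2,\dots)$ with coefficients in the fraction field of $R(T)$; $\Omega(b_i|y)=\prod_{j\ge1}(1-b_iy_j)^{-1}$. For $1\le i\le n-1$, $s_i$ exchanges $a_i,a_{i+1}$ in coefficients; $s_\theta$ exchanges $a_1,a_n$; $s_0(f)=\frac{\Omega(b_1|y)}{\Omega(b_n|y)}s_\theta(f)$. $\alpha_i=a_i-a_{i+1}$, $\alpha_0=a_n-a_1$, $T_i=(1-e^{\alpha_i})^{-1}(s_i-1)$, $D_i=T_i+1$; $T_x,D_x$ via reduced words in $\hat W=\langle s_0,\dots,s_{n-1}\rangle$; $g^{(k)}_x=T_x(1)$, $\tilde g^{(k)}_x=D_x(1)$ for $x\in\hat W^0$ (minimal-length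 representatives of $\hat W/S_n$). The $n$-residue of box (row $r$, column $c$) is $c-r\bmod n$; $\lambda$ is $k$-small if $\lambda_1+\ell(\lambda)\le n$, and then $x_\lambda$ is obtained by adding its boxes one at a time, a box of residue $i$ contributing a left factor $s_i$; $g^{(k)}_\lambda=g^{(k)}_{x_\lambda}$, $\tilde g^{(k)}_\lambda=\tilde g^{(k)}_{x_\lambda}$. $\sigma$ is the automorphism of $\hat\Lambda$, linear over coefficients, sending $f(y_1,y_2,\dots)$ to $f(1,y_1,y_2,\dots)$. *)

theory Defs
  imports "HOL-Library.Poly_Mapping" "HOL-Computational_Algebra.Fraction_Field"
          "HOL-Computational_Algebra.Polynomial_FPS"
begin

text \<open>Laurent polynomials with integer coefficients: a monomial is an exponent
vector (nat =>0 int).  R(T) = Z[e^{+-a_1},...,e^{+-a_n}]/(e^{a_1+...+a_n}-1) is realised as the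
subring of Laurent polynomials in the variables 1..n-1, via e^{a_i} = x_i for i<n and
e^{a_n} = (x_1 ... x_{n-1})^{-1}.  Its fraction field sits inside the fraction field
of lpoly.\<close>

type_synonym lpoly = "(nat \<Rightarrow>\<^sub>0 int) \<Rightarrow>\<^sub>0 int"
type_synonym coef = "lpoly fract"

text \<open>Exponent vector of e^{a_i}, for 1 <= i <= n.\<close>
definition expo :: "nat \<Rightarrow> nat \<Rightarrow> (nat \<Rightarrow>\<^sub>0 int)" where
  "expo n i = (if i = n then - (\<Sum>j\<in>{1..<n}. Poly_Mapping.single j 1)
               else Poly_Mapping.single i 1)"

definition eA :: "nat \<Rightarrow> nat \<Rightarrow> coef" where
  "eA n i = Fraction_Field.Fract (Poly_Mapping.single (expo n i) 1) 1"

text \<open>Subscripts of a_i, b_i are read mod n in {1..n}.\<close>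
definition aidx :: "nat \<Rightarrow> int \<Rightarrow> nat" where
  "aidx n k = (let r = nat (k mod int n) in if r = 0 then n else r)"

definition bvar :: "nat \<Rightarrow> nat \<Rightarrow> coef" where
  "bvar n i = 1 - inverse (eA n i)"

definition eAlpha :: "nat \<Rightarrow> nat \<Rightarrow> coef" where
  "eAlpha n i = (if i = 0 then eA n n / eA n 1 else eA n i / eA n (i + 1))"

definition transp_fn :: "nat \<Rightarrow> nat \<Rightarrow> nat \<Rightarrow> nat" where
  "transp_fn i j k = (if k = i then j else if k = j then i else k)"

text \<open>Action of a permutation w of {1..n} (a_i |-> a_{w i}) on exponent vectors:
the part on the variables 1..n-1 encodes sum_{i<n} c_i a_i, everything else is
left untouched.\<close>
definition perm_expo :: "nat \<Rightarrow> (nat \<Rightarrow> nat) \<Rightarrow> (nat \<Rightarrow>\<^sub>0 int) \<Rightarrow> (nat \<Rightarrow>\<^sub>0 int)" where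
  "perm_expo n w c =
     (c - (\<Sum>i\<in>{1..<n}. Poly_Mapping.single i (Poly_Mapping.lookup c i)))
     + (\<Sum>i\<in>{1..<n}. (if w i = n
            then (\<Sum>j\<in>{1..<n}. Poly_Mapping.single j (- Poly_Mapping.lookup c i))
            else Poly_Mapping.single (w i) (Poly_Mapping.lookup c i)))"

definition lpoly_perm :: "nat \<Rightarrow> (nat \<Rightarrow> nat) \<Rightarrow> lpoly \<Rightarrow> lpoly" where
  "lpoly_perm n w f = frag_extend (\<lambda>c. Poly_Mapping.single (perm_expo n w c) 1) f"

definition coef_perm :: "nat \<Rightarrow> (nat \<Rightarrow> nat) \<Rightarrow> coef \<Rightarrow> coef" where
  "coef_perm n w x = (let pq = (SOME pq. snd pq \<noteq> 0 \<and> x = Fraction_Field.Fract (fst pq) (snd pq))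
                      in Fraction_Field.Fract (lpoly_perm n w (fst pq)) (lpoly_perm n w (snd pq)))"

text \<open>Variable y_{j+1} is indexed by j :: nat; monomials are finitely supported
exponent vectors; a series is its coefficient function.\<close>
type_synonym ser = "(nat \<Rightarrow>\<^sub>0 nat) \<Rightarrow> coef"

definition ser_one :: ser where
  "ser_one m = (if m = 0 then 1 else 0)"

definition ser_mult :: "ser \<Rightarrow> ser \<Rightarrow> ser" where
  "ser_mult f g m = (\<Sum>p\<in>{p. fst p + snd p = m}. f (fst p) * g (snd p))"

definition ser_smult :: "coef \<Rightarrow> ser \<Rightarrow> ser" where
  "ser_smult c f m = c * f m"

definition tdeg :: "(nat \<Rightarrow>\<^sub>0 nat) \<Rightarrow> nat" where
  "tdeg m = (\<Sum>j\<in>Poly_Mapping.keys m. Poly_Mapping.lookup m j)"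

text \<open>Omega(b|y) = prod_j (1 - b y_j)^{-1}\<close>
definition Omega :: "coef \<Rightarrow> ser" where
  "Omega b m = b ^ tdeg m"

text \<open>Omega(b|y)^{-1} = prod_j (1 - b y_j)\<close>
definition Omega_inv :: "coef \<Rightarrow> ser" where
  "Omega_inv b m = (if (\<forall>j. Poly_Mapping.lookup m j \<le> 1) then (- b) ^ tdeg m else 0)"

definition s_op :: "nat \<Rightarrow> nat \<Rightarrow> ser \<Rightarrow> ser" where
  "s_op n i f = (if i = 0
     then ser_mult (ser_mult (Omega (bvar n 1)) (Omega_inv (bvar n n)))
                   (\<lambda>m. coef_perm n (transp_fn 1 n) (f m))
     else (\<lambda>m. coef_perm n (transp_fn i (i + 1)) (f m)))"

definition T_op :: "nat \<Rightarrow> nat \<Rightarrow> ser \<Rightarrow> ser" where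
  "T_op n i f m = (s_op n i f m - f m) / (1 - eAlpha n i)"

definition D_op :: "nat \<Rightarrow> nat \<Rightarrow> ser \<Rightarrow> ser" where
  "D_op n i f m = T_op n i f m + f m"

text \<open>A partition: weakly decreasing list of positive parts; lam ! (r-1) = lambda_r.\<close>
definition is_partition :: "nat list \<Rightarrow> bool" where
  "is_partition lam \<longleftrightarrow> sorted_wrt (\<ge>) lam \<and> 0 \<notin> set lam"

definition k_small :: "nat \<Rightarrow> nat list \<Rightarrow> bool" where
  "k_small n lam \<longleftrightarrow> (if lam = [] then 0 else hd lam) + length lam \<le> n"

text \<open>n-residue of the box in row r, column c (1-based).\<close>
definition residue :: "nat \<Rightarrow> nat \<Rightarrow> nat \<Rightarrow> nat" where
  "residue n r c = nat ((int c - int r) mod int n)"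

text \<open>Residues of the boxes of lam, in the order in which they are added
(row by row, left to right); this order builds lam through partitions.\<close>
definition res_word :: "nat \<Rightarrow> nat list \<Rightarrow> nat list" where
  "res_word n lam = concat (map (\<lambda>r. map (\<lambda>c. residue n r c) [1..<lam ! (r - 1) + 1])
                                [1..<length lam + 1])"

text \<open>x_lam = s_{i_m} ... s_{i_1} where i_1 is the residue of the first box added;
T_{x_lam} = T_{i_m} o ... o T_{i_1}.\<close>
definition g_k :: "nat \<Rightarrow> nat list \<Rightarrow> ser" where
  "g_k n lam = foldl (\<lambda>f i. T_op n i f) ser_one (res_word n lam)"

definition gt_k :: "nat \<Rightarrow> nat list \<Rightarrow> ser" where
  "gt_k n lam = foldl (\<lambda>f i. D_op n i f) ser_one (res_word n lam)"

definition conj_part :: "nat list \<Rightarrow> nat \<Rightarrow> nat" where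
  "conj_part lam i = length (filter (\<lambda>x. i \<le> x) lam)"

definition diag :: "nat list \<Rightarrow> nat set" where
  "diag lam = {i. 1 \<le> i \<and> i \<le> length lam \<and> i \<le> lam ! (i - 1)}"

definition diag_factor :: "nat \<Rightarrow> nat list \<Rightarrow> coef" where
  "diag_factor n lam = (\<Prod>i\<in>diag lam.
      eA n (aidx n (int (lam ! (i - 1)) - int i + 1)) / eA n (aidx n (int i - int (conj_part lam i))))"

definition rat_eval1 :: "coef fps \<Rightarrow> coef" where
  "rat_eval1 F = (THE v. \<exists>p q. poly q 1 \<noteq> 0 \<and> fps_of_poly q * F = fps_of_poly p
                              \<and> v = poly p 1 / poly q 1)"

definition shift_mon :: "(nat \<Rightarrow>\<^sub>0 nat) \<Rightarrow> (nat \<Rightarrow>\<^sub>0 nat)" where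
  "shift_mon m = (\<Sum>j\<in>Poly_Mapping.keys m. Poly_Mapping.single (Suc j) (Poly_Mapping.lookup m j))"

text \<open>Coefficient of y^m in f(1,y_1,y_2,...): the new first variable z gets
substituted by 1 in the series sum_k [z^k y'^m] f z^k (y' = shifted variables).\<close>
definition sigma_op :: "ser \<Rightarrow> ser" where
  "sigma_op f m = rat_eval1 (Abs_fps (\<lambda>k. f (Poly_Mapping.single 0 k + shift_mon m)))"

end

theory Submission
  imports Defs "HOL-Combinatorics.Permutations"
begin

text \<open>
  The series occurring here are expansions of rational functions
  regular at 1, so \<open>\<sigma>\<close> is multiplicative and commutes with the field automorphisms
  permuting the \<open>a\<^sub>i\<close>.  Hence \<open>\<sigma>\<close> commutes with \<open>T\<^sub>i\<close> for \<open>i \<ge> 1\<close>, while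
  \<open>\<sigma>(s\<^sub>0 f) = e^(a\<^sub>1 - a\<^sub>n) s\<^sub>0(\<sigma> f)\<close>.  If \<open>\<sigma> f = e^\<mu> G\<close> for a monomial \<open>e^\<mu>\<close> in the \<open>e^a\<^sub>j\<close>
  with \<open>e^\<mu> = s\<^sub>i(e^\<mu>) e^\<alpha>\<^sub>i\<close> (resp. \<open>s\<^sub>0(e^\<mu>) = e^\<mu>\<close>), then \<open>\<sigma>(T\<^sub>i f)\<close> is again a monomial
  times \<open>D\<^sub>i G\<close>.  Following the residue word of \<open>\<lambda>\<close> box by box, the box of content \<open>x\<close>
  multiplies the monomial by \<open>e^(a_(x+1) - a_x)\<close>.  For \<open>k\<close>-small \<open>\<lambda>\<close> all contents involved lie
  in fewer than \<open>n\<close> consecutive integers, which makes the condition hold at every step, and the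
  final monomial \<open>\<Prod>\<^sub>r e^(a_(\<lambda>_r - r + 1) - a_(1 - r))\<close> equals the diagonal factor, by
  induction on the number of rows.
\<close>

section \<open>Permuting the variables \<open>a\<^sub>i\<close>\<close>

lemma frag_extend_frag_extend:
  "frag_extend f (frag_extend g c) = frag_extend (frag_extend f \<circ> g) c"
  using subset_UNIV
  by (induction c rule: frag_induction) (auto simp: frag_extend_diff)

lemma frag_extend_add_fun:
  "frag_extend (\<lambda>k. f k + g k) c = frag_extend f c + frag_extend g c"
  by (simp add: frag_extend_def frag_cmul_distrib2 sum.distrib)

lemma frag_extend_eq_sum:
  assumes "finite S" and "\<And>k. k \<notin> S \<Longrightarrow> f k = 0"
  shows "frag_extend f c = (\<Sum>k\<in>S. frag_cmul (Poly_Mapping.lookup c k) (f k))"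
  unfolding frag_extend_def using assms
  by (intro sum.mono_neutral_cong) (auto simp: in_keys_iff)

lemma frag_cmul_frag_of: "frag_cmul k (frag_of x) = Poly_Mapping.single x k"
  by (rule poly_mapping_eqI) (simp add: lookup_single when_def)

lemma frag_cmul_diff_distrib2: "frag_cmul k (a - b) = frag_cmul k a - frag_cmul k b"
  by (rule poly_mapping_eqI) (simp add: lookup_minus algebra_simps)

lemma perm_expo_eq_frag_extend:
  "perm_expo n w = frag_extend (\<lambda>k. if k \<in> {1..<n} then expo n (w k) else frag_of k)"
proof
  fix c
  have summand: "(if w i = n then \<Sum>j\<in>{1..<n}. Poly_Mapping.single j (- Poly_Mapping.lookup c i)
                  else Poly_Mapping.single (w i) (Poly_Mapping.lookup c i))
               = frag_cmul (Poly_Mapping.lookup c i) (expo n (w i))" for i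
    by (rule poly_mapping_eqI) (simp add: expo_def lookup_sum lookup_single when_def)
  have "frag_extend (\<lambda>k. if k \<in> {1..<n} then expo n (w k) else frag_of k) c
      = frag_extend frag_of c
        + frag_extend (\<lambda>k. if k \<in> {1..<n} then expo n (w k) - frag_of k else 0) c"
    unfolding frag_extend_add_fun[symmetric] by (rule arg_cong[where f = "\<lambda>f. frag_extend f c"]) auto
  also have "\<dots> = c + (\<Sum>k\<in>{1..<n}. frag_cmul (Poly_Mapping.lookup c k) (expo n (w k) - frag_of k))"
    by (subst frag_extend_eq_sum[of "{1..<n}"]) (auto simp flip: frag_expansion)
  also have "\<dots> = perm_expo n w c"
    by (simp add: perm_expo_def summand frag_cmul_diff_distrib2 sum_subtractf frag_cmul_frag_of)
  finally show "perm_expo n w c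
      = frag_extend (\<lambda>k. if k \<in> {1..<n} then expo n (w k) else frag_of k) c" ..
qed

lemma expo_below: "j < n \<Longrightarrow> expo n j = frag_of j"
  by (simp add: expo_def)

lemma sum_expo: "(\<Sum>j\<in>{1..n}. expo n j) = 0"
proof (cases "n = 0")
  case False
  then have "{1..n} = insert n {1..<n}" by auto
  then show ?thesis by (simp add: expo_below expo_def)
qed simp

lemma perm_expo_expo:
  assumes w: "w permutes {1..n}" and j: "j \<in> {1..n}"
  shows "perm_expo n w (expo n j) = expo n (w j)"
proof (cases "j = n")
  case True
  have split: "{1..n} = insert n {1..<n}" using j by auto
  have "(\<Sum>i\<in>{1..n}. expo n (w i)) = (\<Sum>i\<in>{1..n}. expo n i)"
    by (rule sum.reindex_bij_betw[OF permutes_imp_bij[OF w]])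
  also have "\<dots> = 0" by (rule sum_expo)
  finally have "(\<Sum>i\<in>{1..n}. expo n (w i)) = 0" .
  then have "- (\<Sum>i\<in>{1..<n}. expo n (w i)) = expo n (w n)"
    unfolding split by (simp add: add_eq_0_iff)
  then show ?thesis
    using True by (simp add: perm_expo_eq_frag_extend expo_def frag_extend_minus frag_extend_sum)
next
  case False
  then show ?thesis using j by (simp add: perm_expo_eq_frag_extend expo_below)
qed

lemma perm_expo_inverse:
  assumes w: "w permutes {1..n}"
  shows "perm_expo n (inv w) (perm_expo n w c) = c"
proof -
  define \<phi> where "\<phi> k = (if k \<in> {1..<n} then expo n (w k) else frag_of k)" for k
  have inv_\<phi>: "perm_expo n (inv w) (\<phi> k) = frag_of k" for k
  proof (cases "k \<in> {1..<n}")
    case True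
    then have "w k \<in> {1..n}" using permutes_in_image[OF w] by auto
    then show ?thesis
      using True perm_expo_expo[OF permutes_inv[OF w]] permutes_inverses(2)[OF w]
      by (simp add: \<phi>_def expo_below)
  next
    case False
    then show ?thesis by (auto simp: \<phi>_def perm_expo_eq_frag_extend)
  qed
  have "perm_expo n (inv w) (perm_expo n w c) = frag_extend (perm_expo n (inv w) \<circ> \<phi>) c"
    unfolding perm_expo_eq_frag_extend[of n w] \<phi>_def[symmetric]
    unfolding perm_expo_eq_frag_extend[of n "inv w"] by (rule frag_extend_frag_extend)
  also have "\<dots> = c"
    by (simp add: comp_def inv_\<phi> flip: frag_expansion)
  finally show ?thesis .
qed

lemma frag_extend_frag_of_mult:
  fixes h :: "'a::monoid_add \<Rightarrow> 'b::monoid_add"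
  assumes h_add: "\<And>a b. h (a + b) = h a + h b"
  shows "frag_extend (\<lambda>c. frag_of (h c)) (p * q)
       = frag_extend (\<lambda>c. frag_of (h c)) p * frag_extend (\<lambda>c. frag_of (h c)) q"
proof -
  have single_left: "frag_extend (\<lambda>c. frag_of (h c)) (frag_of a * q)
      = frag_of (h a) * frag_extend (\<lambda>c. frag_of (h c)) q" for a
    using subset_UNIV
    by (induction q rule: frag_induction)
       (simp_all add: mult_single h_add frag_extend_diff right_diff_distrib)
  show ?thesis
    using subset_UNIV
    by (induction p rule: frag_induction)
       (simp_all add: single_left frag_extend_diff left_diff_distrib)
qed

lemma perm_expo_add: "perm_expo n w (a + b) = perm_expo n w a + perm_expo n w b"
  by (simp add: perm_expo_eq_frag_extend frag_extend_add)

lemma lpoly_perm_add: "lpoly_perm n w (p + q) = lpoly_perm n w p + lpoly_perm n w q"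
  by (simp add: lpoly_perm_def frag_extend_add)

lemma lpoly_perm_frag_of: "lpoly_perm n w (frag_of c) = frag_of (perm_expo n w c)"
  by (simp add: lpoly_perm_def)

lemma lpoly_perm_mult: "lpoly_perm n w (p * q) = lpoly_perm n w p * lpoly_perm n w q"
  unfolding lpoly_perm_def by (rule frag_extend_frag_of_mult[OF perm_expo_add])

lemma lpoly_perm_one: "lpoly_perm n w 1 = 1"
proof -
  have "perm_expo n w 0 = 0" by (simp add: perm_expo_eq_frag_extend)
  then show ?thesis
    using frag_extend_of[of "\<lambda>c. frag_of (perm_expo n w c)" 0] by (simp add: lpoly_perm_def)
qed

lemma lpoly_perm_inverse:
  assumes "w permutes {1..n}"
  shows "lpoly_perm n (inv w) (lpoly_perm n w p) = p"
  using subset_UNIV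
  by (induction p rule: frag_induction)
     (simp_all add: lpoly_perm_def frag_extend_diff perm_expo_inverse[OF assms])

lemma lpoly_perm_eq_0_iff:
  assumes "w permutes {1..n}"
  shows "lpoly_perm n w p = 0 \<longleftrightarrow> p = 0"
  by (metis lpoly_perm_inverse[OF assms] frag_extend_0 lpoly_perm_def)

lemma coef_perm_Fract:
  assumes w: "w permutes {1..n}" and "q \<noteq> 0"
  shows "coef_perm n w (Fraction_Field.Fract p q)
       = Fraction_Field.Fract (lpoly_perm n w p) (lpoly_perm n w q)"
proof -
  define pq where
    "pq = (SOME pq. snd pq \<noteq> 0 \<and> Fraction_Field.Fract p q = Fraction_Field.Fract (fst pq) (snd pq))"
  have "snd pq \<noteq> 0 \<and> Fraction_Field.Fract p q = Fraction_Field.Fract (fst pq) (snd pq)"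
    unfolding pq_def by (rule someI[of _ "(p, q)"]) (simp add: \<open>q \<noteq> 0\<close>)
  then have "snd pq \<noteq> 0" and "p * snd pq = fst pq * q"
    using \<open>q \<noteq> 0\<close> eq_fract(1) by blast+
  then have "Fraction_Field.Fract (lpoly_perm n w (fst pq)) (lpoly_perm n w (snd pq))
      = Fraction_Field.Fract (lpoly_perm n w p) (lpoly_perm n w q)"
    using \<open>q \<noteq> 0\<close> by (simp add: eq_fract(1) lpoly_perm_eq_0_iff[OF w] flip: lpoly_perm_mult)
  then show ?thesis unfolding coef_perm_def pq_def[symmetric] Let_def by simp
qed

locale field_hom = additive \<phi> for \<phi> :: "'a::field \<Rightarrow> 'b::field" +
  assumes hom_mult: "\<phi> (x * y) = \<phi> x * \<phi> y"
    and hom_one: "\<phi> 1 = 1"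
begin

lemma hom_inverse: "\<phi> (inverse x) = inverse (\<phi> x)"
proof (cases "x = 0")
  case False
  then have "\<phi> x * \<phi> (inverse x) = 1" by (simp flip: hom_mult hom_one)
  then show ?thesis by (metis inverse_unique)
qed (simp add: zero)

lemma hom_divide: "\<phi> (x / y) = \<phi> x / \<phi> y"
  by (simp add: divide_inverse hom_mult hom_inverse)

lemma hom_prod: "\<phi> (prod f A) = (\<Prod>i\<in>A. \<phi> (f i))"
  by (induction A rule: infinite_finite_induct) (auto simp: hom_one hom_mult)

lemma hom_power: "\<phi> (x ^ k) = \<phi> x ^ k"
  by (induction k) (auto simp: hom_one hom_mult)

lemma hom_power_int: "\<phi> (power_int x k) = power_int (\<phi> x) k"
  by (cases "k \<ge> 0") (auto simp: power_int_def hom_power hom_inverse)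

lemma hom_eq_0_iff: "\<phi> x = 0 \<longleftrightarrow> x = 0"
  by (metis hom_inverse hom_mult hom_one inverse_zero mult_zero_left right_inverse zero zero_neq_one)

lemma hom_poly: "poly (map_poly \<phi> p) (\<phi> x) = \<phi> (poly p x)"
  by (induction p) (simp_all add: map_poly_pCons zero add hom_mult)

end

lemma coef_perm_field_hom:
  assumes "w permutes {1..n}"
  shows "field_hom (coef_perm n w)"
proof
  fix x y :: coef
  show "coef_perm n w (x + y) = coef_perm n w x + coef_perm n w y"
    by (cases x, cases y)
       (simp add: coef_perm_Fract[OF assms] lpoly_perm_add lpoly_perm_mult lpoly_perm_eq_0_iff[OF assms])
  show "coef_perm n w (x * y) = coef_perm n w x * coef_perm n w y"
    by (cases x, cases y)
       (simp add: coef_perm_Fract[OF assms] lpoly_perm_mult lpoly_perm_eq_0_iff[OF assms])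
  show "coef_perm n w 1 = 1"
    unfolding One_fract_def by (simp add: coef_perm_Fract[OF assms] lpoly_perm_one)
qed

lemma coef_perm_eA:
  assumes "w permutes {1..n}" and "j \<in> {1..n}"
  shows "coef_perm n w (eA n j) = eA n (w j)"
  unfolding eA_def
  by (simp add: coef_perm_Fract[OF assms(1)] lpoly_perm_one lpoly_perm_frag_of perm_expo_expo[OF assms])

lemma eA_nonzero: "eA n j \<noteq> 0"
  by (simp add: eA_def eq_fract Zero_fract_def)

lemma expo_inj:
  assumes "i \<in> {1..n}" and "j \<in> {1..n}" and "expo n i = expo n j"
  shows "i = j"
proof (rule ccontr)
  assume "i \<noteq> j"
  then obtain k l where "k \<in> {1..<n}" "l \<in> {1..n}" "k \<noteq> l" "expo n k = expo n l"
    using assms by (metis atLeastAtMost_iff atLeastLessThan_iff le_neq_implies_less)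
  then have "Poly_Mapping.lookup (expo n k) k = Poly_Mapping.lookup (expo n l) k" by simp
  then show False
    using \<open>k \<in> {1..<n}\<close> \<open>k \<noteq> l\<close> by (simp add: expo_def lookup_sum lookup_single when_def split: if_splits)
qed

lemma eA_eq_iff:
  assumes "i \<in> {1..n}" and "j \<in> {1..n}"
  shows "eA n i = eA n j \<longleftrightarrow> i = j"
  using expo_inj[OF assms] by (auto simp: eA_def eq_fract frag_of_eq)

section \<open>Values at 1 of rational power series\<close>

definition rat_value_at_1 :: "'a::field fps \<Rightarrow> 'a \<Rightarrow> bool" where
  "rat_value_at_1 F v \<longleftrightarrow>
     (\<exists>p q. poly q 1 \<noteq> 0 \<and> fps_of_poly q * F = fps_of_poly p \<and> v = poly p 1 / poly q 1)"

lemma rat_value_at_1_unique: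
  assumes "rat_value_at_1 F v" and "rat_value_at_1 F v'"
  shows "v = v'"
proof -
  obtain p q where pq: "poly q 1 \<noteq> 0" "fps_of_poly q * F = fps_of_poly p" "v = poly p 1 / poly q 1"
    using assms(1) unfolding rat_value_at_1_def by blast
  obtain p' q' where pq': "poly q' 1 \<noteq> 0" "fps_of_poly q' * F = fps_of_poly p'"
    "v' = poly p' 1 / poly q' 1"
    using assms(2) unfolding rat_value_at_1_def by blast
  have "fps_of_poly (q' * p) = fps_of_poly (q * p')"
    unfolding fps_of_poly_mult pq(2)[symmetric] pq'(2)[symmetric] by (simp add: algebra_simps)
  then have "poly q' 1 * poly p 1 = poly q 1 * poly p' 1"
    by (metis fps_of_poly_eq_iff poly_mult)
  then show ?thesis
    using pq pq' by (simp add: frac_eq_eq mult.commute)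
qed

lemma rat_eval1_eqI:
  assumes "rat_value_at_1 F v"
  shows "rat_eval1 F = v"
proof -
  have "rat_eval1 F = (THE v. rat_value_at_1 F v)"
    by (simp add: rat_eval1_def rat_value_at_1_def)
  also have "\<dots> = v"
    using assms rat_value_at_1_unique by blast
  finally show ?thesis .
qed

lemma rat_value_at_1_poly: "rat_value_at_1 (fps_of_poly p) (poly p 1)"
  unfolding rat_value_at_1_def by (intro exI[of _ p] exI[of _ 1]) simp

lemma rat_value_at_1_const: "rat_value_at_1 (fps_const c) c"
  using rat_value_at_1_poly[of "[:c:]"] by (simp add: fps_of_poly_const)

lemma rat_value_at_1_add:
  assumes "rat_value_at_1 F v" and "rat_value_at_1 G w"
  shows "rat_value_at_1 (F + G) (v + w)"
proof -
  obtain p q where pq: "poly q 1 \<noteq> 0" "fps_of_poly q * F = fps_of_poly p" "v = poly p 1 / poly q 1"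
    using assms(1) unfolding rat_value_at_1_def by blast
  obtain p' q' where pq': "poly q' 1 \<noteq> 0" "fps_of_poly q' * G = fps_of_poly p'"
    "w = poly p' 1 / poly q' 1"
    using assms(2) unfolding rat_value_at_1_def by blast
  have "fps_of_poly (q * q') * (F + G) = fps_of_poly (p * q' + p' * q)"
    unfolding fps_of_poly_mult fps_of_poly_add pq(2)[symmetric] pq'(2)[symmetric]
    by (simp add: algebra_simps)
  moreover have "v + w = poly (p * q' + p' * q) 1 / poly (q * q') 1"
    using pq pq' by (simp add: add_frac_eq)
  ultimately show ?thesis
    using pq(1) pq'(1) unfolding rat_value_at_1_def by (metis mult_eq_0_iff poly_mult)
qed

lemma rat_value_at_1_mult:
  assumes "rat_value_at_1 F v" and "rat_value_at_1 G w"
  shows "rat_value_at_1 (F * G) (v * w)"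
proof -
  obtain p q where pq: "poly q 1 \<noteq> 0" "fps_of_poly q * F = fps_of_poly p" "v = poly p 1 / poly q 1"
    using assms(1) unfolding rat_value_at_1_def by blast
  obtain p' q' where pq': "poly q' 1 \<noteq> 0" "fps_of_poly q' * G = fps_of_poly p'"
    "w = poly p' 1 / poly q' 1"
    using assms(2) unfolding rat_value_at_1_def by blast
  have "fps_of_poly (q * q') * (F * G) = fps_of_poly (p * p')"
    unfolding fps_of_poly_mult pq(2)[symmetric] pq'(2)[symmetric] by (simp add: algebra_simps)
  moreover have "v * w = poly (p * p') 1 / poly (q * q') 1"
    using pq pq' by simp
  ultimately show ?thesis
    using pq(1) pq'(1) unfolding rat_value_at_1_def by (metis mult_eq_0_iff poly_mult)
qed

lemma rat_value_at_1_cmult: "rat_value_at_1 F v \<Longrightarrow> rat_value_at_1 (fps_const c * F) (c * v)"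
  by (rule rat_value_at_1_mult[OF rat_value_at_1_const])

lemma rat_value_at_1_diff:
  assumes "rat_value_at_1 F v" and "rat_value_at_1 G w"
  shows "rat_value_at_1 (F - G) (v - w)"
  using rat_value_at_1_add[OF assms(1) rat_value_at_1_cmult[OF assms(2), of "-1"]]
  by (simp add: fps_const_neg[symmetric])

lemma rat_value_at_1_sum:
  "(\<And>x. x \<in> A \<Longrightarrow> rat_value_at_1 (F x) (v x)) \<Longrightarrow> rat_value_at_1 (sum F A) (sum v A)"
  by (induction A rule: infinite_finite_induct)
     (auto intro: rat_value_at_1_add rat_value_at_1_const[of 0, simplified])

lemma rat_value_at_1_geometric:
  assumes "b \<noteq> 1"
  shows "rat_value_at_1 (Abs_fps (\<lambda>k. b ^ k)) (1 / (1 - b))"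
proof -
  have "fps_of_poly [:1, - b:] * Abs_fps (\<lambda>k. b ^ k) = fps_of_poly 1"
  proof (rule fps_ext)
    fix k
    show "fps_nth (fps_of_poly [:1, - b:] * Abs_fps (\<lambda>k. b ^ k)) k = fps_nth (fps_of_poly 1) k"
    proof (cases k)
      case (Suc j)
      have "fps_nth (fps_of_poly [:1, - b:] * Abs_fps (\<lambda>k. b ^ k)) k
          = (\<Sum>i=0..Suc j. coeff [:1, - b:] i * b ^ (Suc j - i))"
        unfolding fps_mult_nth Suc by simp
      also have "\<dots> = (\<Sum>i\<in>{0,1}. coeff [:1, - b:] i * b ^ (Suc j - i))"
        by (rule sum.mono_neutral_right) (auto simp: coeff_pCons split: nat.splits)
      finally show ?thesis using Suc by simp
    qed (simp add: fps_mult_nth)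
  qed
  moreover have "poly [:1, - b:] 1 \<noteq> 0" using assms by simp
  ultimately show ?thesis
    unfolding rat_value_at_1_def by (intro exI[of _ 1] exI[of _ "[:1, - b:]"]) simp
qed

lemma rat_value_at_1_map:
  assumes \<phi>: "field_hom \<phi>" and F: "rat_value_at_1 F v"
  shows "rat_value_at_1 (Abs_fps (\<lambda>k. \<phi> (fps_nth F k))) (\<phi> v)"
proof -
  interpret field_hom \<phi> by (rule \<phi>)
  obtain p q where pq: "poly q 1 \<noteq> 0" "fps_of_poly q * F = fps_of_poly p" "v = poly p 1 / poly q 1"
    using F unfolding rat_value_at_1_def by blast
  have "fps_of_poly (map_poly \<phi> q) * Abs_fps (\<lambda>k. \<phi> (fps_nth F k))
      = Abs_fps (\<lambda>k. \<phi> (fps_nth (fps_of_poly q * F) k))"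
    by (rule fps_ext) (simp add: fps_mult_nth coeff_map_poly zero sum hom_mult)
  also have "\<dots> = fps_of_poly (map_poly \<phi> p)"
    unfolding pq(2) by (rule fps_ext) (simp add: coeff_map_poly zero)
  finally show ?thesis
    using pq hom_poly[of _ 1] unfolding rat_value_at_1_def
    by (metis hom_divide hom_eq_0_iff hom_one)
qed

section \<open>The substitution \<open>\<sigma>\<close>\<close>

definition cons_mon :: "nat \<Rightarrow> (nat \<Rightarrow>\<^sub>0 nat) \<Rightarrow> (nat \<Rightarrow>\<^sub>0 nat)" where
  "cons_mon k m = Poly_Mapping.single 0 k + shift_mon m"

definition tail_mon :: "(nat \<Rightarrow>\<^sub>0 nat) \<Rightarrow> (nat \<Rightarrow>\<^sub>0 nat)" where
  "tail_mon p = Abs_poly_mapping (\<lambda>j. Poly_Mapping.lookup p (Suc j))"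

lemma lookup_shift_mon:
  "Poly_Mapping.lookup (shift_mon m) j = (case j of 0 \<Rightarrow> 0 | Suc i \<Rightarrow> Poly_Mapping.lookup m i)"
proof (cases j)
  case (Suc i)
  have "Poly_Mapping.lookup (shift_mon m) j
      = (\<Sum>x\<in>Poly_Mapping.keys m. if x = i then Poly_Mapping.lookup m x else 0)"
    by (simp add: shift_mon_def lookup_sum lookup_single when_def Suc)
  also have "\<dots> = Poly_Mapping.lookup m i" by (simp add: in_keys_iff)
  finally show ?thesis using Suc by simp
qed (simp add: shift_mon_def lookup_sum lookup_single)

lemma lookup_cons_mon:
  "Poly_Mapping.lookup (cons_mon k m) j = (case j of 0 \<Rightarrow> k | Suc i \<Rightarrow> Poly_Mapping.lookup m i)"
  by (simp add: cons_mon_def lookup_add lookup_single lookup_shift_mon split: nat.split)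

lemma lookup_tail_mon: "Poly_Mapping.lookup (tail_mon p) j = Poly_Mapping.lookup p (Suc j)"
proof -
  have "{j. Poly_Mapping.lookup p (Suc j) \<noteq> 0} = Suc -` Poly_Mapping.keys p"
    by (auto simp: in_keys_iff)
  then have "finite {j. Poly_Mapping.lookup p (Suc j) \<noteq> 0}" by (simp add: finite_vimageI)
  then show ?thesis unfolding tail_mon_def by simp
qed

lemma cons_mon_tail_mon: "cons_mon (Poly_Mapping.lookup p 0) (tail_mon p) = p"
  by (rule poly_mapping_eqI) (simp add: lookup_cons_mon lookup_tail_mon split: nat.split)

lemma cons_mon_inject: "cons_mon k m = cons_mon k' m' \<longleftrightarrow> k = k' \<and> m = m'"
  by (metis (no_types, lifting) lookup_cons_mon lookup_tail_mon nat.case poly_mapping_eqI)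

lemma cons_mon_add: "cons_mon i a + cons_mon j b = cons_mon (i + j) (a + b)"
  by (rule poly_mapping_eqI) (simp add: lookup_add lookup_cons_mon split: nat.split)

lemma cons_mon_eq_0_iff: "cons_mon k m = 0 \<longleftrightarrow> k = 0 \<and> m = 0"
  by (metis (no_types, lifting) add_cancel_right_left cons_mon_add cons_mon_inject add_0)

lemma tdeg_cons_mon: "tdeg (cons_mon k m) = k + tdeg m"
proof -
  let ?p = "cons_mon k m"
  have keys: "Poly_Mapping.keys ?p \<subseteq> insert 0 (Suc ` Poly_Mapping.keys m)"
    by (auto simp: in_keys_iff lookup_cons_mon split: nat.splits)
  have "tdeg ?p = sum (Poly_Mapping.lookup ?p) (insert 0 (Suc ` Poly_Mapping.keys m))"
    unfolding tdeg_def using keys by (intro sum.mono_neutral_left) (auto simp: in_keys_iff)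
  also have "\<dots> = k + sum (Poly_Mapping.lookup ?p \<circ> Suc) (Poly_Mapping.keys m)"
    by (simp add: sum.reindex lookup_cons_mon image_iff)
  also have "\<dots> = k + tdeg m"
    by (simp add: tdeg_def lookup_cons_mon)
  finally show ?thesis .
qed

lemma cons_mon_squarefree_iff:
  "(\<forall>j. Poly_Mapping.lookup (cons_mon k m) j \<le> 1) \<longleftrightarrow> k \<le> 1 \<and> (\<forall>j. Poly_Mapping.lookup m j \<le> 1)"
  by (metis lookup_cons_mon nat.case old.nat.exhaust)

definition first_var_series :: "ser \<Rightarrow> (nat \<Rightarrow>\<^sub>0 nat) \<Rightarrow> coef fps" where
  "first_var_series f m = Abs_fps (\<lambda>k. f (cons_mon k m))"

text \<open>Since \<^const>\<open>sigma_op\<close> is defined by a definite description, we work with this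
  relation, which records for each coefficient a rational function witnessing the value at 1.\<close>

definition has_sigma :: "ser \<Rightarrow> ser \<Rightarrow> bool" where
  "has_sigma f h \<longleftrightarrow> (\<forall>m. rat_value_at_1 (first_var_series f m) (h m))"

lemma sigma_op_eqI: "has_sigma f h \<Longrightarrow> sigma_op f = h"
  unfolding has_sigma_def
  by (rule ext) (simp add: sigma_op_def rat_eval1_eqI first_var_series_def cons_mon_def)

lemma has_sigma_one: "has_sigma ser_one ser_one"
proof -
  have "first_var_series ser_one m = fps_const (ser_one m)" for m
    by (rule fps_ext) (simp add: first_var_series_def ser_one_def cons_mon_eq_0_iff)
  then show ?thesis
    by (simp add: has_sigma_def rat_value_at_1_const)
qed

lemma has_sigma_lincomb:
  assumes "has_sigma f h" and "has_sigma g k"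
  shows "has_sigma (\<lambda>m. (g m - f m) / d) (\<lambda>m. (k m - h m) / d)"
proof -
  have "first_var_series (\<lambda>m. (g m - f m) / d) m
      = fps_const (1 / d) * (first_var_series g m - first_var_series f m)" for m
    by (rule fps_ext) (simp add: first_var_series_def)
  then show ?thesis
    using assms unfolding has_sigma_def
    by (auto intro!: rat_value_at_1_cmult[of _ _ "1 / d", simplified] rat_value_at_1_diff)
qed

lemma has_sigma_map:
  assumes "field_hom \<phi>" and "has_sigma f h"
  shows "has_sigma (\<lambda>m. \<phi> (f m)) (\<lambda>m. \<phi> (h m))"
proof -
  have "first_var_series (\<lambda>m. \<phi> (f m)) m = Abs_fps (\<lambda>k. \<phi> (fps_nth (first_var_series f m) k))" for m
    by (simp add: first_var_series_def)
  then show ?thesis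
    using assms rat_value_at_1_map[OF assms(1)] unfolding has_sigma_def by simp
qed

lemma bij_betw_cons_mon_splittings:
  "bij_betw (\<lambda>((a, b), i). (cons_mon i a, cons_mon (k - i) b))
     ({p. fst p + snd p = m} \<times> {0..k}) {p. fst p + snd p = cons_mon k m}"
proof (rule bij_betw_byWitness
    [where f' = "\<lambda>(p, q). ((tail_mon p, tail_mon q), Poly_Mapping.lookup p 0)"])
  have split: "Poly_Mapping.lookup p 0 + Poly_Mapping.lookup q 0 = k \<and> tail_mon p + tail_mon q = m"
    if "p + q = cons_mon k m" for p q
    using that cons_mon_tail_mon[of p] cons_mon_tail_mon[of q]
    by (metis cons_mon_add cons_mon_inject)
  show "\<forall>x\<in>{p. fst p + snd p = m} \<times> {0..k}.
      (\<lambda>(p, q). ((tail_mon p, tail_mon q), Poly_Mapping.lookup p 0))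
        ((\<lambda>((a, b), i). (cons_mon i a, cons_mon (k - i) b)) x) = x"
    using cons_mon_tail_mon cons_mon_inject by (auto simp: lookup_cons_mon) (metis)+
  show "\<forall>y\<in>{p. fst p + snd p = cons_mon k m}.
      (\<lambda>((a, b), i). (cons_mon i a, cons_mon (k - i) b))
        ((\<lambda>(p, q). ((tail_mon p, tail_mon q), Poly_Mapping.lookup p 0)) y) = y"
    using split cons_mon_tail_mon by (auto simp: diff_eq_eq[symmetric]) (metis add_diff_cancel_left')
  show "(\<lambda>((a, b), i). (cons_mon i a, cons_mon (k - i) b)) ` ({p. fst p + snd p = m} \<times> {0..k})
      \<subseteq> {p. fst p + snd p = cons_mon k m}"
    by (auto simp: cons_mon_add)
  show "(\<lambda>(p, q). ((tail_mon p, tail_mon q), Poly_Mapping.lookup p 0))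
        ` {p. fst p + snd p = cons_mon k m} \<subseteq> {p. fst p + snd p = m} \<times> {0..k}"
    using split by fastforce
qed

lemma first_var_series_ser_mult:
  "first_var_series (ser_mult f g) m
     = (\<Sum>p\<in>{p. fst p + snd p = m}. first_var_series f (fst p) * first_var_series g (snd p))"
proof (rule fps_ext)
  fix k
  let ?S = "{p. fst p + snd p = m}"
  have "fps_nth (\<Sum>p\<in>?S. first_var_series f (fst p) * first_var_series g (snd p)) k
      = (\<Sum>(p, i)\<in>?S \<times> {0..k}. f (cons_mon i (fst p)) * g (cons_mon (k - i) (snd p)))"
    by (simp add: fps_sum_nth fps_mult_nth first_var_series_def sum.cartesian_product)
  also have "\<dots> = (\<Sum>x\<in>?S \<times> {0..k}.
      (\<lambda>q. f (fst q) * g (snd q)) ((\<lambda>((a, b), i). (cons_mon i a, cons_mon (k - i) b)) x))"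
    by (rule sum.cong) auto
  also have "\<dots> = (\<Sum>q\<in>{q. fst q + snd q = cons_mon k m}. f (fst q) * g (snd q))"
    by (rule sum.reindex_bij_betw[OF bij_betw_cons_mon_splittings])
  finally show "fps_nth (first_var_series (ser_mult f g) m) k
      = fps_nth (\<Sum>p\<in>?S. first_var_series f (fst p) * first_var_series g (snd p)) k"
    by (simp add: first_var_series_def ser_mult_def)
qed

lemma has_sigma_mult:
  assumes "has_sigma f h" and "has_sigma g k"
  shows "has_sigma (ser_mult f g) (ser_mult h k)"
  using assms
  by (auto simp: has_sigma_def first_var_series_ser_mult ser_mult_def
           intro!: rat_value_at_1_sum rat_value_at_1_mult)

lemma has_sigma_Omega:
  assumes "b \<noteq> 1"
  shows "has_sigma (Omega b) (\<lambda>m. Omega b m / (1 - b))"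
proof -
  have "first_var_series (Omega b) m = fps_const (b ^ tdeg m) * Abs_fps (\<lambda>k. b ^ k)" for m
    by (rule fps_ext) (simp add: first_var_series_def Omega_def tdeg_cons_mon power_add)
  then show ?thesis
    using rat_value_at_1_cmult[OF rat_value_at_1_geometric[OF assms]]
    by (simp add: has_sigma_def Omega_def)
qed

lemma has_sigma_Omega_inv: "has_sigma (Omega_inv b) (\<lambda>m. (1 - b) * Omega_inv b m)"
proof -
  have "first_var_series (Omega_inv b) m = fps_of_poly [:Omega_inv b m, - b * Omega_inv b m:]" for m
  proof (rule fps_ext)
    fix k
    show "fps_nth (first_var_series (Omega_inv b) m) k
        = fps_nth (fps_of_poly [:Omega_inv b m, - b * Omega_inv b m:]) k"
      unfolding first_var_series_def fps_nth_Abs_fps fps_of_poly_nth Omega_inv_def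
        cons_mon_squarefree_iff tdeg_cons_mon
      by (cases k; cases "k - 1") (auto simp: coeff_pCons)
  qed
  then show ?thesis
    using rat_value_at_1_poly[of "[:Omega_inv b m, - b * Omega_inv b m:]" for m]
    by (simp add: has_sigma_def algebra_simps)
qed

section \<open>\<open>\<sigma>\<close> and the Demazure-Lusztig operators\<close>

lemma transp_fn_eq_transpose: "transp_fn = Transposition.transpose"
  by (simp add: fun_eq_iff transp_fn_def Transposition.transpose_def)

lemma eAlpha_ne_1:
  assumes "2 \<le> n" and "i < n"
  shows "eAlpha n i \<noteq> 1"
proof -
  have "eA n n \<noteq> eA n 1" and "i \<noteq> 0 \<Longrightarrow> eA n i \<noteq> eA n (i + 1)"
    using assms by (simp_all add: eA_eq_iff)
  then show ?thesis by (auto simp: eAlpha_def eA_nonzero)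
qed

lemma ser_mult_scale_left: "ser_mult (\<lambda>m. c * f m) g = (\<lambda>m. c * ser_mult f g m)"
  by (rule ext) (simp add: ser_mult_def sum_distrib_left mult.assoc)

lemma ser_mult_scale_right: "ser_mult f (\<lambda>m. c * g m) = (\<lambda>m. c * ser_mult f g m)"
  by (rule ext) (simp add: ser_mult_def sum_distrib_left mult.left_commute)

lemma T_op_eq: "T_op n i f = (\<lambda>m. (s_op n i f m - f m) / (1 - eAlpha n i))"
  by (simp add: T_op_def fun_eq_iff)

lemma has_sigma_T_op:
  assumes "i \<in> {1..<n}" and "has_sigma f h"
  shows "has_sigma (T_op n i f) (T_op n i h)"
proof -
  have "field_hom (coef_perm n (transp_fn i (i + 1)))"
    using assms(1) by (intro coef_perm_field_hom) (simp add: transp_fn_eq_transpose permutes_swap_id)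
  from has_sigma_lincomb[OF assms(2) has_sigma_map[OF this assms(2)], of "1 - eAlpha n i"]
  show ?thesis
    using assms(1) by (simp add: T_op_eq s_op_def)
qed

text \<open>Substituting 1 for the first variable turns the factor \<open>\<Omega>(b\<^sub>1|y) / \<Omega>(b\<^sub>n|y)\<close> of \<open>s\<^sub>0\<close>
  into the constant \<open>(1 - b\<^sub>n) / (1 - b\<^sub>1) = e^(a\<^sub>1 - a\<^sub>n)\<close>, so \<open>\<sigma>\<close> does not commute with \<open>s\<^sub>0\<close>.\<close>

lemma has_sigma_s0:
  assumes "1 \<le> n" and "has_sigma f h"
  shows "has_sigma (s_op n 0 f) (\<lambda>m. eA n 1 / eA n n * s_op n 0 h m)"
proof -
  have "field_hom (coef_perm n (transp_fn 1 n))"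
    using assms(1) by (intro coef_perm_field_hom) (simp add: transp_fn_eq_transpose permutes_swap_id)
  note perm = has_sigma_map[OF this assms(2)]
  have "bvar n 1 \<noteq> 1" by (simp add: bvar_def eA_nonzero)
  then have "has_sigma (Omega (bvar n 1)) (\<lambda>m. eA n 1 * Omega (bvar n 1) m)"
    using has_sigma_Omega[of "bvar n 1"] by (simp add: bvar_def divide_inverse mult.commute)
  moreover have "has_sigma (Omega_inv (bvar n n)) (\<lambda>m. inverse (eA n n) * Omega_inv (bvar n n) m)"
    using has_sigma_Omega_inv[of "bvar n n"] by (simp add: bvar_def)
  ultimately have "has_sigma (s_op n 0 f)
      (ser_mult (ser_mult (\<lambda>m. eA n 1 * Omega (bvar n 1) m)
                          (\<lambda>m. inverse (eA n n) * Omega_inv (bvar n n) m))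
                (\<lambda>m. coef_perm n (transp_fn 1 n) (h m)))"
    unfolding s_op_def using perm by (simp add: has_sigma_mult)
  then show ?thesis
    by (simp add: ser_mult_scale_left ser_mult_scale_right s_op_def divide_inverse mult.assoc)
qed

lemma has_sigma_T0:
  assumes "1 \<le> n" and "has_sigma f h"
  shows "has_sigma (T_op n 0 f) (\<lambda>m. (eA n 1 / eA n n * s_op n 0 h m - h m) / (1 - eAlpha n 0))"
  using has_sigma_lincomb[OF assms(2) has_sigma_s0[OF assms], of "1 - eAlpha n 0"]
  by (simp add: T_op_eq)

lemma aidx_in_range: "1 \<le> n \<Longrightarrow> aidx n x \<in> {1..n}"
proof -
  assume "1 \<le> n"
  then have "0 \<le> x mod int n" "x mod int n < int n" by auto
  then show ?thesis unfolding aidx_def Let_def by auto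
qed

lemma aidx_0 [simp]: "aidx n 0 = n"
  by (simp add: aidx_def)

lemma aidx_of_nat: "i < n \<Longrightarrow> aidx n (int i) = (if i = 0 then n else i)"
  by (simp add: aidx_def)

lemma aidx_eq_iff_mod: "1 \<le> n \<Longrightarrow> aidx n x = aidx n y \<longleftrightarrow> x mod int n = y mod int n"
proof -
  assume n: "1 \<le> n"
  have range: "0 \<le> x mod int n" "x mod int n < int n" "0 \<le> y mod int n" "y mod int n < int n"
    using n by auto
  have "(if u = 0 then n else nat u) = (if v = 0 then n else nat v) \<longleftrightarrow> u = v"
    if "0 \<le> u" "u < int n" "0 \<le> v" "v < int n" for u v :: int
    using that by (auto simp: nat_eq_iff)
  moreover have "aidx n z = (if z mod int n = 0 then n else nat (z mod int n))" for z
    using n unfolding aidx_def Let_def by (simp add: nat_eq_iff)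
  ultimately show ?thesis using range by metis
qed

lemma aidx_eq_iff:
  assumes "1 \<le> n" and "\<bar>x - y\<bar> < int n"
  shows "aidx n x = aidx n y \<longleftrightarrow> x = y"
proof -
  have "x = y" if "int n dvd x - y"
  proof (rule ccontr)
    assume "x \<noteq> y"
    then have "\<bar>int n\<bar> \<le> \<bar>x - y\<bar>" using dvd_imp_le_int[OF _ that] by simp
    then show False using assms(2) by simp
  qed
  then show ?thesis
    using aidx_eq_iff_mod[OF assms(1)] by (auto simp: mod_eq_dvd_iff)
qed

definition eA_monomial :: "nat \<Rightarrow> (nat \<Rightarrow> int) \<Rightarrow> coef" where
  "eA_monomial n \<mu> = (\<Prod>j\<in>{1..n}. power_int (eA n j) (\<mu> j))"

lemma eA_monomial_zero [simp]: "eA_monomial n (\<lambda>_. 0) = 1"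
  by (simp add: eA_monomial_def)

lemma eA_monomial_add: "eA_monomial n (\<lambda>j. \<mu> j + \<nu> j) = eA_monomial n \<mu> * eA_monomial n \<nu>"
  by (simp add: eA_monomial_def power_int_add eA_nonzero prod.distrib)

lemma eA_monomial_diff: "eA_monomial n (\<lambda>j. \<mu> j - \<nu> j) = eA_monomial n \<mu> / eA_monomial n \<nu>"
  by (simp add: eA_monomial_def power_int_diff eA_nonzero prod_dividef)

lemma eA_monomial_sum:
  "finite A \<Longrightarrow> eA_monomial n (\<lambda>j. \<Sum>r\<in>A. \<mu> r j) = (\<Prod>r\<in>A. eA_monomial n (\<mu> r))"
  by (induction A rule: finite_induct) (simp_all add: eA_monomial_add)

lemma eA_monomial_indicator:
  assumes "p \<in> {1..n}"
  shows "eA_monomial n (\<lambda>j. of_bool (j = p)) = eA n p"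
proof -
  have "eA_monomial n (\<lambda>j. of_bool (j = p)) = (\<Prod>j\<in>{1..n}. if j = p then eA n j else 1)"
    unfolding eA_monomial_def by (rule prod.cong) auto
  then show ?thesis using assms by simp
qed

lemma coef_perm_eA_monomial:
  assumes w: "w permutes {1..n}"
  shows "coef_perm n w (eA_monomial n \<mu>) = eA_monomial n (\<mu> \<circ> inv w)"
proof -
  interpret field_hom "coef_perm n w" by (rule coef_perm_field_hom[OF w])
  have "coef_perm n w (eA_monomial n \<mu>) = (\<Prod>j\<in>{1..n}. power_int (eA n (w j)) (\<mu> j))"
    unfolding eA_monomial_def hom_prod hom_power_int by (simp add: coef_perm_eA[OF w])
  also have "\<dots> = (\<Prod>j\<in>{1..n}. power_int (eA n (w (inv w j))) (\<mu> (inv w j)))"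
    by (rule prod.reindex_bij_betw[OF permutes_imp_bij[OF permutes_inv[OF w]], symmetric])
  also have "\<dots> = eA_monomial n (\<mu> \<circ> inv w)"
    by (simp add: eA_monomial_def permutes_inverses(1)[OF w])
  finally show ?thesis .
qed

definition weight_step :: "nat \<Rightarrow> nat \<Rightarrow> (nat \<Rightarrow> int) \<Rightarrow> (nat \<Rightarrow> int)" where
  "weight_step n i \<mu> = (\<lambda>j. \<mu> j - of_bool (j = aidx n (int i)) + of_bool (j = i + 1))"

text \<open>Passing \<open>e^\<mu>\<close> through \<open>s\<^sub>i\<close> replaces \<open>\<mu>\<close> by \<^const>\<open>weight_step\<close>; the condition
  says that this costs exactly a factor \<open>e^\<alpha>\<^sub>i\<close> for \<open>i > 0\<close> (and nothing for \<open>i = 0\<close>), which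
  turns \<open>T\<^sub>i\<close> into \<open>D\<^sub>i\<close>.\<close>

definition weight_step_ok :: "nat \<Rightarrow> nat \<Rightarrow> (nat \<Rightarrow> int) \<Rightarrow> bool" where
  "weight_step_ok n i \<mu> \<longleftrightarrow> i < n \<and> \<mu> (aidx n (int i)) - \<mu> (i + 1) = (if i = 0 then 0 else 1)"

lemma eA_monomial_weight_step:
  assumes "i < n"
  shows "eA_monomial n (weight_step n i \<mu>) = eA_monomial n \<mu> * eA n (i + 1) / eA n (aidx n (int i))"
proof -
  have "i + 1 \<in> {1..n}" and "aidx n (int i) \<in> {1..n}"
    using assms aidx_in_range[of n] by auto
  then show ?thesis
    unfolding weight_step_def
    by (simp add: eA_monomial_add eA_monomial_diff eA_monomial_indicator)
qed

lemma T_op_eA_monomial: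
  assumes i: "i \<in> {1..<n}" and ok: "weight_step_ok n i \<mu>"
  shows "T_op n i (\<lambda>m. eA_monomial n \<mu> * G m)
       = (\<lambda>m. eA_monomial n (weight_step n i \<mu>) * D_op n i G m)"
proof -
  let ?t = "transp_fn i (Suc i)"
  have t: "?t permutes {1..n}"
    using i by (simp add: transp_fn_eq_transpose permutes_swap_id)
  interpret field_hom "coef_perm n ?t" by (rule coef_perm_field_hom[OF t])
  have step: "\<mu> \<circ> inv ?t = weight_step n i \<mu>"
    using i ok by (auto simp: fun_eq_iff transp_fn_def weight_step_def weight_step_ok_def aidx_of_nat
                          transp_fn_eq_transpose)
  have perm: "coef_perm n ?t (eA_monomial n \<mu>) = eA_monomial n (weight_step n i \<mu>)"
    unfolding coef_perm_eA_monomial[OF t] step ..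
  have ratio: "eA_monomial n \<mu> = eA_monomial n (weight_step n i \<mu>) * eAlpha n i"
    using i by (simp add: eA_monomial_weight_step aidx_of_nat eAlpha_def eA_nonzero)
  have "eAlpha n i \<noteq> 1"
    using i by (intro eAlpha_ne_1) auto
  show ?thesis
  proof
    fix m
    have "T_op n i (\<lambda>m. eA_monomial n \<mu> * G m) m
        = (eA_monomial n (weight_step n i \<mu>) * s_op n i G m - eA_monomial n \<mu> * G m)
          / (1 - eAlpha n i)"
      using i by (simp add: T_op_def s_op_def hom_mult perm)
    also have "\<dots> = eA_monomial n (weight_step n i \<mu>) * D_op n i G m"
      using \<open>eAlpha n i \<noteq> 1\<close> unfolding ratio by (simp add: D_op_def T_op_def field_simps)
    finally show "T_op n i (\<lambda>m. eA_monomial n \<mu> * G m) m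
        = eA_monomial n (weight_step n i \<mu>) * D_op n i G m" .
  qed
qed

lemma T0_twisted_eA_monomial:
  assumes n: "2 \<le> n" and ok: "weight_step_ok n 0 \<mu>"
  shows "(\<lambda>m. (eA n 1 / eA n n * s_op n 0 (\<lambda>m. eA_monomial n \<mu> * G m) m - eA_monomial n \<mu> * G m)
              / (1 - eAlpha n 0))
       = (\<lambda>m. eA_monomial n (weight_step n 0 \<mu>) * D_op n 0 G m)"
proof -
  let ?t = "transp_fn (Suc 0) n"
  have t: "?t permutes {1..n}"
    using n by (simp add: transp_fn_eq_transpose permutes_swap_id)
  interpret field_hom "coef_perm n ?t" by (rule coef_perm_field_hom[OF t])
  have "\<mu> \<circ> inv ?t = \<mu>"
    using ok by (simp add: fun_eq_iff transp_fn_eq_transpose Transposition.transpose_def weight_step_ok_def)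
  then have perm: "coef_perm n ?t (eA_monomial n \<mu>) = eA_monomial n \<mu>"
    unfolding coef_perm_eA_monomial[OF t] by simp
  have s0: "s_op n 0 (\<lambda>m. eA_monomial n \<mu> * G m) m = eA_monomial n \<mu> * s_op n 0 G m" for m
    unfolding s_op_def by (simp add: hom_mult perm ser_mult_scale_right)
  have step: "eA_monomial n (weight_step n 0 \<mu>) = eA_monomial n \<mu> * (eA n 1 / eA n n)"
    using n by (simp add: eA_monomial_weight_step aidx_of_nat)
  have "eA n 1 \<noteq> eA n n"
    using n by (simp add: eA_eq_iff)
  then have "eA n 1 - eA n n \<noteq> 0" by simp
  then show ?thesis
    unfolding s0 by (simp add: fun_eq_iff step D_op_def T_op_def eAlpha_def eA_nonzero field_simps)
qed

lemma has_sigma_T_op_weighted: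
  assumes n: "2 \<le> n" and ok: "weight_step_ok n i \<mu>"
    and f: "has_sigma f (\<lambda>m. eA_monomial n \<mu> * G m)"
  shows "has_sigma (T_op n i f) (\<lambda>m. eA_monomial n (weight_step n i \<mu>) * D_op n i G m)"
proof (cases "i = 0")
  case True
  have "has_sigma (T_op n 0 f) (\<lambda>m. (eA n 1 / eA n n * s_op n 0 (\<lambda>m. eA_monomial n \<mu> * G m) m
      - eA_monomial n \<mu> * G m) / (1 - eAlpha n 0))"
    using n by (intro has_sigma_T0 f) simp
  then show ?thesis
    unfolding True T0_twisted_eA_monomial[OF n ok[unfolded True]] .
next
  case False
  then have i: "i \<in> {1..<n}" using ok by (simp add: weight_step_ok_def)
  show ?thesis
    using has_sigma_T_op[OF i f] T_op_eA_monomial[OF i ok] by simp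
qed

fun word_weight_ok :: "nat \<Rightarrow> (nat \<Rightarrow> int) \<Rightarrow> nat list \<Rightarrow> bool" where
  "word_weight_ok n \<mu> [] = True"
| "word_weight_ok n \<mu> (i # is) = (weight_step_ok n i \<mu> \<and> word_weight_ok n (weight_step n i \<mu>) is)"

lemma word_weight_ok_append:
  "word_weight_ok n \<mu> (is @ js)
     \<longleftrightarrow> word_weight_ok n \<mu> is \<and> word_weight_ok n (fold (weight_step n) is \<mu>) js"
  by (induction "is" arbitrary: \<mu>) auto

lemma has_sigma_word:
  assumes n: "2 \<le> n"
  shows "word_weight_ok n \<mu> is \<Longrightarrow> has_sigma f (\<lambda>m. eA_monomial n \<mu> * G m) \<Longrightarrow>
    has_sigma (foldl (\<lambda>f i. T_op n i f) f is)
      (\<lambda>m. eA_monomial n (fold (weight_step n) is \<mu>) * foldl (\<lambda>f i. D_op n i f) G is m)"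
proof (induction "is" arbitrary: f G \<mu>)
  case (Cons i "is")
  then show ?case using has_sigma_T_op_weighted[OF n] by simp
qed simp

section \<open>The residue word of a \<open>k\<close>-small partition\<close>

lemma aidx_residue: "1 \<le> n \<Longrightarrow> aidx n (int (residue n r c)) = aidx n (int c - int r)"
  by (simp add: residue_def aidx_def)

lemma Suc_residue: "1 \<le> n \<Longrightarrow> residue n r c + 1 = aidx n (int c - int r + 1)"
proof -
  assume n: "1 \<le> n"
  define x where "x = int c - int r"
  have x: "0 \<le> x mod int n" "x mod int n < int n" using n by auto
  have "(x + 1) mod int n = (x mod int n + 1) mod int n" by (simp add: mod_add_left_eq)
  also have "\<dots> = (if x mod int n = int n - 1 then 0 else x mod int n + 1)"
    using x by (auto simp: mod_pos_pos_trivial)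
  finally show ?thesis
    unfolding residue_def aidx_def Let_def x_def[symmetric] using x by (auto simp: nat_add_distrib)
qed

lemma residue_less: "1 \<le> n \<Longrightarrow> residue n r c < n"
  by (simp add: residue_def nat_less_iff)

lemma residue_eq_0_iff:
  assumes "1 \<le> n" and "\<bar>int c - int r\<bar> < int n"
  shows "residue n r c = 0 \<longleftrightarrow> c = r"
proof -
  have "residue n r c = 0 \<longleftrightarrow> (int c - int r) mod int n = 0 mod int n"
    unfolding residue_def using assms(1) by (simp add: nat_eq_iff)
  also have "\<dots> \<longleftrightarrow> int c - int r = 0"
    using aidx_eq_iff[OF assms(1), of "int c - int r" 0] aidx_eq_iff_mod[OF assms(1), of "int c - int r" 0]
      assms(2) by simp
  finally show ?thesis by simp
qed

lemma count_first_column_contents: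
  "(\<Sum>r'\<in>{1..<r}. of_bool (y = 1 - int r') :: int) = of_bool (2 - int r \<le> y \<and> y \<le> 0)"
proof -
  have "(\<Sum>r'\<in>{1..<r}. of_bool (y = 1 - int r') :: int)
      = (\<Sum>r'\<in>{1..<r}. if r' = nat (1 - y) \<and> y \<le> 0 then 1 else 0)"
    by (rule sum.cong) auto
  also have "\<dots> = of_bool (2 - int r \<le> y \<and> y \<le> 0)"
    by (auto simp: sum.If_cases nat_less_iff le_nat_iff)
  finally show ?thesis .
qed

abbreviation eA_at :: "nat \<Rightarrow> int \<Rightarrow> coef" where
  "eA_at n t \<equiv> eA n (aidx n t)"

definition row_weight :: "nat \<Rightarrow> nat \<Rightarrow> nat \<Rightarrow> nat \<Rightarrow> int" where
  "row_weight n r c =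
     (\<lambda>j. of_bool (j = aidx n (int c - int r + 1)) - of_bool (j = aidx n (1 - int r)))"

text \<open>The exponent after adding the first \<open>r - 1\<close> rows and \<open>c\<close> boxes of row \<open>r\<close>: a box of
  content \<open>x\<close> contributes \<open>a_(x+1) - a_x\<close>, which telescopes along each row.\<close>

definition partial_weight :: "nat \<Rightarrow> nat list \<Rightarrow> nat \<Rightarrow> nat \<Rightarrow> nat \<Rightarrow> int" where
  "partial_weight n lam r c =
     (\<lambda>j. (\<Sum>r'\<in>{1..<r}. row_weight n r' (lam ! (r' - 1)) j) + row_weight n r c j)"

lemma weight_step_partial_weight:
  assumes "1 \<le> n"
  shows "weight_step n (residue n r (c + 1)) (partial_weight n lam r c)
       = partial_weight n lam r (c + 1)"
proof -
  have "aidx n (int (residue n r (c + 1))) = aidx n (int c - int r + 1)"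
    using aidx_residue[OF assms, of r "c + 1"] by (simp add: algebra_simps)
  moreover have "residue n r (c + 1) + 1 = aidx n (int (c + 1) - int r + 1)"
    by (rule Suc_residue[OF assms])
  ultimately show ?thesis
    by (simp add: fun_eq_iff weight_step_def partial_weight_def row_weight_def)
qed

lemma partial_weight_first_row: "partial_weight n lam 1 0 = (\<lambda>_. 0)"
  by (simp add: partial_weight_def row_weight_def)

lemma partial_weight_next_row:
  "1 \<le> r \<Longrightarrow> partial_weight n lam r (lam ! (r - 1)) = partial_weight n lam (r + 1) 0"
  by (simp add: fun_eq_iff partial_weight_def row_weight_def atLeastLessThanSuc)

lemma eA_monomial_partial_weight:
  assumes "1 \<le> n"
  shows "eA_monomial n (partial_weight n lam R 0)
     = (\<Prod>r\<in>{1..<R}. eA_at n (int (lam ! (r - 1)) - int r + 1) / eA_at n (1 - int r))"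
proof -
  have "partial_weight n lam R 0 = (\<lambda>j. \<Sum>r\<in>{1..<R}. row_weight n r (lam ! (r - 1)) j)"
    by (simp add: fun_eq_iff partial_weight_def row_weight_def)
  then show ?thesis
    using aidx_in_range[OF assms]
    by (simp add: eA_monomial_sum row_weight_def eA_monomial_diff eA_monomial_indicator)
qed

locale k_small_partition =
  fixes n :: nat and lam :: "nat list"
  assumes two_le_n: "2 \<le> n" and partition: "is_partition lam" and small: "k_small n lam"
begin

lemma nth_antimono: "i \<le> j \<Longrightarrow> j < length lam \<Longrightarrow> lam ! j \<le> lam ! i"
  using partition unfolding is_partition_def sorted_wrt_iff_nth_less
  by (metis le_eq_less_or_eq)

lemma first_part_plus_length: "lam \<noteq> [] \<Longrightarrow> lam ! 0 + length lam \<le> n"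
  using small by (simp add: k_small_def hd_conv_nth)

text \<open>\<open>k\<close>-smallness: all contents met below lie in a window of fewer than \<open>n\<close> consecutive
  integers, on which reading subscripts mod \<open>n\<close> is injective.\<close>

lemma aidx_eq_iff_window:
  assumes "lam \<noteq> []"
    and "y \<in> {1 - int (length lam)..int (lam ! 0)}" and "z \<in> {1 - int (length lam)..int (lam ! 0)}"
  shows "aidx n y = aidx n z \<longleftrightarrow> y = z"
  using assms first_part_plus_length two_le_n by (intro aidx_eq_iff) auto

lemma partial_weight_at_content:
  assumes r: "r \<in> {1..length lam}" and c: "c < lam ! (r - 1)"
    and y: "y \<in> {1 - int (length lam)..int (c + 1) - int r + 1}"
  shows "partial_weight n lam r c (aidx n y)
       = of_bool (y = int (c + 1) - int r) - of_bool (1 - int r \<le> y \<and> y \<le> 0)"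
proof -
  let ?W = "{1 - int (length lam)..int (lam ! 0)}"
  have ne: "lam \<noteq> []" using r by auto
  have "lam ! (r - 1) \<le> lam ! 0" using nth_antimono[of 0 "r - 1"] r by auto
  then have yW: "y \<in> ?W" and xW: "int (c + 1) - int r \<in> ?W" and rW: "1 - int r \<in> ?W"
    using y c r by auto
  have earlier_row: "of_bool (aidx n y = aidx n (int (lam ! (r' - 1)) - int r' + 1))
      - of_bool (aidx n y = aidx n (1 - int r')) = - (of_bool (y = 1 - int r') :: int)"
    if r': "r' \<in> {1..<r}" for r'
  proof -
    have "lam ! (r - 1) \<le> lam ! (r' - 1)" and "lam ! (r' - 1) \<le> lam ! 0"
      using nth_antimono[of "r' - 1" "r - 1"] nth_antimono[of 0 "r' - 1"] r r' by auto
    then have "int (lam ! (r' - 1)) - int r' + 1 \<in> ?W" and "y < int (lam ! (r' - 1)) - int r' + 1"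
      and "1 - int r' \<in> ?W"
      using y c r r' by auto
    then show ?thesis
      using aidx_eq_iff_window[OF ne yW] by auto
  qed
  have earlier_rows: "(\<Sum>r'\<in>{1..<r}. of_bool (aidx n y = aidx n (int (lam ! (r' - 1)) - int r' + 1))
      - of_bool (aidx n y = aidx n (1 - int r'))) = - (of_bool (2 - int r \<le> y \<and> y \<le> 0) :: int)"
    by (simp only: sum.cong[OF refl earlier_row] sum_negf count_first_column_contents)
  have "partial_weight n lam r c (aidx n y)
      = - of_bool (2 - int r \<le> y \<and> y \<le> 0) + of_bool (y = int (c + 1) - int r) - of_bool (y = 1 - int r)"
    unfolding partial_weight_def row_weight_def earlier_rows
    using aidx_eq_iff_window[OF ne yW xW] aidx_eq_iff_window[OF ne yW rW] by (simp add: algebra_simps)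
  then show ?thesis using r by auto
qed

lemma weight_step_ok_partial_weight:
  assumes r: "r \<in> {1..length lam}" and c: "c < lam ! (r - 1)"
  shows "weight_step_ok n (residue n r (c + 1)) (partial_weight n lam r c)"
proof -
  define x where "x = int (c + 1) - int r"
  have n: "1 \<le> n" using two_le_n by simp
  have "lam ! (r - 1) \<le> lam ! 0" using nth_antimono[of 0 "r - 1"] r by auto
  moreover have "lam \<noteq> []" using r by auto
  ultimately have close: "\<bar>int (c + 1) - int r\<bar> < int n"
    using first_part_plus_length r c by fastforce
  then have zero: "residue n r (c + 1) = 0 \<longleftrightarrow> x = 0"
    using residue_eq_0_iff[OF n close] by (auto simp: x_def)
  have "aidx n (int (residue n r (c + 1))) = aidx n x"
    using aidx_residue[OF n] by (simp add: x_def)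
  moreover have "residue n r (c + 1) + 1 = aidx n (x + 1)"
    using Suc_residue[OF n] by (simp add: x_def)
  moreover have "partial_weight n lam r c (aidx n x) - partial_weight n lam r c (aidx n (x + 1))
      = (if x = 0 then 0 else 1)"
    using partial_weight_at_content[OF r c, of x] partial_weight_at_content[OF r c, of "x + 1"] r
    by (auto simp: x_def)
  ultimately show ?thesis
    using residue_less[OF n] zero by (simp add: weight_step_ok_def)
qed

lemma row_word_weight:
  assumes r: "r \<in> {1..length lam}"
  shows "c \<le> lam ! (r - 1) \<Longrightarrow>
    word_weight_ok n (partial_weight n lam r 0) (map (residue n r) [1..<c + 1]) \<and>
    fold (weight_step n) (map (residue n r) [1..<c + 1]) (partial_weight n lam r 0)
      = partial_weight n lam r c"
proof (induction c)
  case (Suc c)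
  have "[1..<Suc c + 1] = [1..<c + 1] @ [c + 1]" by simp
  then show ?case
    using Suc weight_step_ok_partial_weight[OF r] weight_step_partial_weight[of n r c lam] two_le_n
    by (simp only: map_append word_weight_ok_append fold_append) simp
qed simp

abbreviation rows_word :: "nat \<Rightarrow> nat list" where
  "rows_word R \<equiv> concat (map (\<lambda>r. map (residue n r) [1..<lam ! (r - 1) + 1]) [1..<R + 1])"

lemma rows_word_weight:
  "R \<le> length lam \<Longrightarrow> word_weight_ok n (\<lambda>_. 0) (rows_word R) \<and>
    fold (weight_step n) (rows_word R) (\<lambda>_. 0) = partial_weight n lam (R + 1) 0"
proof (induction R)
  case 0
  then show ?case using partial_weight_first_row[of n lam] by simp
next
  case (Suc R)
  have "[1..<Suc R + 1] = [1..<R + 1] @ [R + 1]" by simp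
  then show ?case
    using Suc row_word_weight[of "R + 1" "lam ! R"] partial_weight_next_row[of "R + 1" n lam]
    by (simp only: map_append concat_append word_weight_ok_append fold_append) (simp del: upt_Suc)
qed

lemma res_word_weight:
  "word_weight_ok n (\<lambda>_. 0) (res_word n lam)"
  "fold (weight_step n) (res_word n lam) (\<lambda>_. 0) = partial_weight n lam (length lam + 1) 0"
  using rows_word_weight[of "length lam"] by (simp_all add: res_word_def)

end

section \<open>The diagonal factor\<close>

lemma conj_part_snoc: "conj_part (xs @ [v]) i = conj_part xs i + of_bool (i \<le> v)"
  by (simp add: conj_part_def)

lemma conj_part_eq_length: "\<forall>x\<in>set xs. i \<le> x \<Longrightarrow> conj_part xs i = length xs"
  by (simp add: conj_part_def filter_id_conv)

lemma diag_snoc: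
  assumes "\<forall>x\<in>set xs. v \<le> x"
  shows "diag (xs @ [v]) = diag xs \<union> (if length xs + 1 \<le> v then {length xs + 1} else {})"
  using assms by (auto simp: diag_def nth_append le_Suc_eq)

lemma diag_upto:
  assumes "\<forall>x\<in>set xs. v \<le> x"
  shows "{i \<in> diag xs. i \<le> v} = {1..min v (length xs)}"
  using assms by (auto simp: diag_def) (metis Suc_le_eq diff_Suc_1 le_trans nth_mem Suc_pred)

lemma prod_diag_telescope:
  assumes "\<forall>x\<in>set xs. v \<le> x"
  defines "R \<equiv> length xs"
  shows "(\<Prod>i\<in>{i \<in> diag xs. i \<le> v}. eA_at n (int i - int R) / eA_at n (int i - int R - 1))
       = eA_at n (int (min v R) - int R) / eA_at n (- int R)"
proof -
  have "(\<Prod>i\<in>{i \<in> diag xs. i \<le> v}. eA_at n (int i - int R) / eA_at n (int i - int R - 1))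
      = (\<Prod>i = Suc 0..min v R. eA_at n (int i - int R) / eA_at n (int (i - 1) - int R))"
    unfolding diag_upto[OF assms(1)] R_def[symmetric]
    by (intro prod.cong) (auto simp: of_nat_diff algebra_simps)
  also have "\<dots> = eA_at n (int (min v R) - int R) / eA_at n (- int R)"
    by (subst prod_telescope''[where f = "\<lambda>i. eA_at n (int i - int R)"]) (simp_all add: eA_nonzero)
  finally show ?thesis .
qed

text \<open>The new row raises \<open>\<lambda>'\<^sub>i\<close> by one in the columns \<open>i \<le> v\<close>, which shifts the denominators of
  the old diagonal boxes there and telescopes; if \<open>v > R\<close> it also adds the diagonal box \<open>R + 1\<close>.\<close>

lemma diag_factor_snoc:
  assumes v: "\<forall>x\<in>set xs. v \<le> x"
  defines "R \<equiv> length xs"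
  shows "diag_factor n (xs @ [v]) = diag_factor n xs * (eA_at n (int v - int R) / eA_at n (- int R))"
proof -
  define F where "F i = eA_at n (int ((xs @ [v]) ! (i - 1)) - int i + 1)
                        / eA_at n (int i - int (conj_part (xs @ [v]) i))" for i
  define shift where
    "shift i = (if i \<le> v then eA_at n (int i - int R) / eA_at n (int i - int R - 1) else 1)" for i
  have fin: "finite (diag xs)" by (simp add: diag_def)
  have full: "conj_part xs i = R" if "i \<le> v" for i
    using v that unfolding R_def by (intro conj_part_eq_length) auto
  have old: "F i
      = eA_at n (int (xs ! (i - 1)) - int i + 1) / eA_at n (int i - int (conj_part xs i)) * shift i"
    if "i \<in> diag xs" for i
    using that full by (auto simp: F_def shift_def diag_def nth_append conj_part_snoc R_def
                          eA_nonzero algebra_simps)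
  have new: "F (R + 1) = eA_at n (int v - int R) / eA_at n 0" if "R + 1 \<le> v"
    using that full[of "R + 1"] by (simp add: F_def R_def conj_part_snoc)
  have shifts: "(\<Prod>i\<in>diag xs. shift i) = eA_at n (int (min v R) - int R) / eA_at n (- int R)"
    using fin prod_diag_telescope[OF v, of n, folded R_def]
    by (subst prod.mono_neutral_right[of _ "{i \<in> diag xs. i \<le> v}"]) (auto simp: shift_def)
  have "R + 1 \<notin> diag xs" by (simp add: diag_def R_def)
  then have "diag_factor n (xs @ [v]) = (\<Prod>i\<in>diag xs. F i) * (if R + 1 \<le> v then F (R + 1) else 1)"
    using fin by (simp add: diag_factor_def diag_snoc[OF v] F_def R_def[symmetric])
  also have "(\<Prod>i\<in>diag xs. F i) = diag_factor n xs * (\<Prod>i\<in>diag xs. shift i)"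
    unfolding diag_factor_def prod.distrib[symmetric] by (rule prod.cong) (simp_all add: old)
  also have "(if R + 1 \<le> v then F (R + 1) else 1)
      = (if R + 1 \<le> v then eA_at n (int v - int R) / eA_at n 0 else 1)"
    using new by simp
  finally show ?thesis
    by (simp add: shifts min_def eA_nonzero)
qed

lemma diag_factor_eq_prod_rows:
  "sorted_wrt (\<ge>) lam \<Longrightarrow> diag_factor n lam
     = (\<Prod>r\<in>{1..<length lam + 1}. eA_at n (int (lam ! (r - 1)) - int r + 1) / eA_at n (1 - int r))"
proof (induction lam rule: rev_induct)
  case Nil
  have "diag [] = {}" by (simp add: diag_def)
  then show ?case by (simp add: diag_factor_def)
next
  case (snoc v xs)
  then have v: "\<forall>x\<in>set xs. v \<le> x" and xs: "sorted_wrt (\<ge>) xs"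
    by (simp_all add: sorted_wrt_append)
  have "(\<Prod>r\<in>{1..<length xs + 1}. eA_at n (int ((xs @ [v]) ! (r - 1)) - int r + 1) / eA_at n (1 - int r))
      = (\<Prod>r\<in>{1..<length xs + 1}. eA_at n (int (xs ! (r - 1)) - int r + 1) / eA_at n (1 - int r))"
    by (rule prod.cong) (auto simp: nth_append)
  then show ?case
    using snoc.IH[OF xs] by (simp add: diag_factor_snoc[OF v] atLeastLessThanSuc algebra_simps)
qed

theorem proposition4p1:
  fixes n :: nat and lam :: "nat list"
  assumes "2 \<le> n" and "is_partition lam" and "k_small n lam"
  shows "sigma_op (g_k n lam) = ser_smult (diag_factor n lam) (gt_k n lam)"
proof -
  interpret k_small_partition n lam
    using assms by unfold_locales
  have "has_sigma (g_k n lam)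
      (\<lambda>m. eA_monomial n (fold (weight_step n) (res_word n lam) (\<lambda>_. 0)) * gt_k n lam m)"
    unfolding g_k_def gt_k_def
    using has_sigma_word[OF assms(1) res_word_weight(1)] has_sigma_one by simp
  moreover have "eA_monomial n (fold (weight_step n) (res_word n lam) (\<lambda>_. 0)) = diag_factor n lam"
    using assms(1,2)
    by (simp add: res_word_weight(2) eA_monomial_partial_weight diag_factor_eq_prod_rows is_partition_def)
  ultimately show ?thesis
    by (simp add: sigma_op_eqI ser_smult_def fun_eq_iff)
qed

end
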